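(* For all $n\ge1$, $|\mathcal S_n[3]|=|\mathcal S'_n[3]|=3\cdot2^{2n+1}$.
   Context: Let $\tau=(1+\sqrt5)/2$, $\tau'=(1-\sqrt5)/2$. Let $\mathbb F_4=\mathbb{Z}[\tau]/2\mathbb{Z}[\tau]$ and for $y\in\mathbb{Z}[\tau]^3$ let $\bar y\in\mathbb F_4^3$ be the coordinatewise reduction. For $n\ge1$, $\mathcal S_n[3]=\{x\in2^{-n}\mathbb{Z}[\tau]^3: x\cdot x=1,\ \overline{2^nx}\in\{(\bar1,\bar{\tau'},\bar\tau),(\bar{\tau'},\bar\tau,\bar1),(\bar\tau,\bar1,\bar{\tau'})\}\}$ and $\mathcal S'_n[3]$ is defined in the same way with $\bar\tau$ and $\bar{\tau'}$ interchanged. *)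

theory Defs
  imports Complex_Main
begin

definition tau :: real where "tau = (1 + sqrt 5) / 2"
definition tau' :: real where "tau' = (1 - sqrt 5) / 2"

definition ZT :: "real set" where
  "ZT = {of_int a + of_int b * tau | a b. True}"

text \<open>Equality of reductions in F_4 = Z[tau]/2Z[tau]: for u, v in Z[tau],
  the reductions agree iff u - v lies in 2 Z[tau].\<close>
definition red_eq :: "real \<Rightarrow> real \<Rightarrow> bool" where
  "red_eq u v \<longleftrightarrow> u \<in> ZT \<and> v \<in> ZT \<and> (\<exists>w\<in>ZT. u - v = 2 * w)"

definition red3_eq :: "real \<times> real \<times> real \<Rightarrow> real \<times> real \<times> real \<Rightarrow> bool" where
  "red3_eq y c \<longleftrightarrow> (case y of (y1, y2, y3) \<Rightarrow> case c of (c1, c2, c3) \<Rightarrow>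
      red_eq y1 c1 \<and> red_eq y2 c2 \<and> red_eq y3 c3)"

definition dot3 :: "real \<times> real \<times> real \<Rightarrow> real \<times> real \<times> real \<Rightarrow> real" where
  "dot3 x y = (case x of (x1, x2, x3) \<Rightarrow> case y of (y1, y2, y3) \<Rightarrow>
      x1 * y1 + x2 * y2 + x3 * y3)"

definition scale3 :: "real \<Rightarrow> real \<times> real \<times> real \<Rightarrow> real \<times> real \<times> real" where
  "scale3 c x = (case x of (x1, x2, x3) \<Rightarrow> (c * x1, c * x2, c * x3))"

definition in_lattice :: "nat \<Rightarrow> real \<times> real \<times> real \<Rightarrow> bool" where
  "in_lattice n x \<longleftrightarrow> (case scale3 (2 ^ n) x of (y1, y2, y3) \<Rightarrow>
      y1 \<in> ZT \<and> y2 \<in> ZT \<and> y3 \<in> ZT)"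

definition S3 :: "nat \<Rightarrow> (real \<times> real \<times> real) set" where
  "S3 n = {x. in_lattice n x \<and> dot3 x x = 1 \<and>
     (red3_eq (scale3 (2 ^ n) x) (1, tau', tau) \<or>
      red3_eq (scale3 (2 ^ n) x) (tau', tau, 1) \<or>
      red3_eq (scale3 (2 ^ n) x) (tau, 1, tau'))}"

definition S3' :: "nat \<Rightarrow> (real \<times> real \<times> real) set" where
  "S3' n = {x. in_lattice n x \<and> dot3 x x = 1 \<and>
     (red3_eq (scale3 (2 ^ n) x) (1, tau, tau') \<or>
      red3_eq (scale3 (2 ^ n) x) (tau, tau', 1) \<or>
      red3_eq (scale3 (2 ^ n) x) (tau', 1, tau))}"

end

theory Submission
  imports Defs "HOL-Library.Product_Plus"
begin

text \<open>A point of \<open>2\<^sup>-\<^sup>n \<int>[\<tau>]\<^sup>3\<close> is \<open>2\<^sup>-\<^sup>n (a\<^sub>1 + b\<^sub>1\<tau>, a\<^sub>2 + b\<^sub>2\<tau>, a\<^sub>3 + b\<^sub>3\<tau>)\<close>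
  with integers \<open>a\<^sub>i, b\<^sub>i\<close>. As \<open>1, \<tau>\<close> are linearly independent over \<open>\<rat>\<close>, \<open>x \<cdot> x = 1\<close>
  becomes two integer quadratic equations, and the residue condition becomes a parity pattern of
  the coordinates; Galois conjugation \<open>\<tau> \<mapsto> \<tau>'\<close> exchanges \<open>S\<^sub>n\<close> and \<open>S'\<^sub>n\<close>.
  For \<open>n = 1\<close> there are 24 solutions. Four matrices \<open>M\<^sub>k\<close> over \<open>\<int>[\<tau>]\<close> with
  \<open>M\<^sub>k\<^sup>T M\<^sub>k = 4\<close> map solutions of level \<open>n\<close> to level \<open>n + 1\<close>. Conversely, for \<open>n \<ge> 1\<close>
  a solution \<open>y\<close> of level \<open>n + 1\<close> has exactly one \<open>k\<close> with \<open>M\<^sub>k\<^sup>T y \<equiv> 0 (mod 4)\<close>, and then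
  \<open>z = M\<^sub>k\<^sup>T y / 4\<close> is a solution of level \<open>n\<close> with \<open>M\<^sub>k z = y\<close>; both facts depend only on
  residues modulo 4 resp. 2 and are finite checks. So each level is the disjoint union of four
  copies of the previous one, and \<open>|S\<^sub>n| = 24 \<cdot> 4\<^sup>n\<^sup>-\<^sup>1\<close>.\<close>

lemma tau_mult_self: "tau * tau = tau + 1"
proof -
  have "sqrt 5 * sqrt 5 = (5::real)" by simp
  then show ?thesis unfolding tau_def by (simp add: field_simps)
qed

lemma tau'_eq: "tau' = 1 - tau"
  unfolding tau_def tau'_def by (simp add: field_simps)

text \<open>The norm form of \<open>\<int>[\<tau>]\<close> is anisotropic: if \<open>a\<^sup>2 + ab - b\<^sup>2\<close> is even then
  \<open>a\<close> and \<open>b\<close> are both even, so a nontrivial zero would have infinite 2-adic descent.\<close>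
lemma golden_norm_eq_0:
  fixes a b :: int
  assumes "a * a + a * b - b * b = 0"
  shows "a = 0 \<and> b = 0"
  using assms
proof (induction "nat (\<bar>a\<bar> + \<bar>b\<bar>)" arbitrary: a b rule: less_induct)
  case less
  show ?case
  proof (rule ccontr)
    assume nonzero: "\<not> (a = 0 \<and> b = 0)"
    have "even (a * a + a * b - b * b)" using less.prems by simp
    then have "even a" "even b" by (auto simp: even_mult_iff)
    then obtain a' b' where ab: "a = 2 * a'" "b = 2 * b'" by (auto elim!: evenE)
    have "a' * a' + a' * b' - b' * b' = 0" using less.prems ab by (simp add: algebra_simps)
    moreover have "nat (\<bar>a'\<bar> + \<bar>b'\<bar>) < nat (\<bar>a\<bar> + \<bar>b\<bar>)" using ab nonzero by auto
    ultimately have "a' = 0 \<and> b' = 0" using less.hyps by blast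
    with ab nonzero show False by simp
  qed
qed

definition zt :: "int \<Rightarrow> int \<Rightarrow> real" where
  "zt a b = of_int a + of_int b * tau"

lemma zt_add: "zt a b + zt c d = zt (a + c) (b + d)"
  and zt_diff: "zt a b - zt c d = zt (a - c) (b - d)"
  and zt_scale: "of_int k * zt a b = zt (k * a) (k * b)"
  by (simp_all add: zt_def algebra_simps)

lemma zt_mult: "zt a b * zt c d = zt (a * c + b * d) (a * d + b * c + b * d)"
proof -
  have "zt a b * zt c d = of_int (a * c) + of_int (a * d + b * c) * tau + of_int (b * d) * (tau * tau)"
    unfolding zt_def by (simp add: algebra_simps)
  then show ?thesis unfolding tau_mult_self zt_def by (simp add: algebra_simps)
qed

lemma zt_eq_0_iff: "zt a b = 0 \<longleftrightarrow> a = 0 \<and> b = 0"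
proof
  assume "zt a b = 0"
  then have "of_int a = - (of_int b * tau)" unfolding zt_def by (simp add: eq_neg_iff_add_eq_0)
  then have "(of_int (a * a + a * b - b * b) :: real) = of_int b * of_int b * (tau * tau - tau - 1)"
    by (simp add: algebra_simps)
  also have "\<dots> = 0" by (simp add: tau_mult_self)
  finally have "a * a + a * b - b * b = 0" by (simp only: of_int_eq_0_iff)
  then show "a = 0 \<and> b = 0" by (rule golden_norm_eq_0)
qed (simp add: zt_def)

lemma zt_eq_iff: "zt a b = zt c d \<longleftrightarrow> a = c \<and> b = d"
  using zt_eq_0_iff[of "a - c" "b - d"] by (simp add: zt_diff[symmetric])

lemma ZT_iff: "u \<in> ZT \<longleftrightarrow> (\<exists>a b. u = zt a b)"
  unfolding ZT_def zt_def by auto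

lemma one_eq_zt: "1 = zt 1 0"
  and tau_eq_zt: "tau = zt 0 1"
  and tau'_eq_zt: "tau' = zt 1 (- 1)"
  unfolding zt_def tau'_eq by simp_all

lemma red_eq_zt_iff: "red_eq (zt a b) (zt c d) \<longleftrightarrow> even (a - c) \<and> even (b - d)"
proof
  assume "red_eq (zt a b) (zt c d)"
  then obtain e f where "zt (a - c) (b - d) = 2 * zt e f"
    unfolding red_eq_def zt_diff by (auto simp: ZT_iff)
  then have "a - c = 2 * e \<and> b - d = 2 * f"
    using zt_scale[of 2 e f] by (simp add: zt_eq_iff)
  then show "even (a - c) \<and> even (b - d)" by simp
next
  assume "even (a - c) \<and> even (b - d)"
  then obtain e f where "a - c = 2 * e" "b - d = 2 * f" by (meson evenE)
  then have "zt a b - zt c d = 2 * zt e f"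
    using zt_scale[of 2 e f] by (simp add: zt_diff)
  moreover have "zt a b \<in> ZT" "zt c d \<in> ZT" "zt e f \<in> ZT" unfolding ZT_iff by blast+
  ultimately show "red_eq (zt a b) (zt c d)" unfolding red_eq_def by blast
qed

type_synonym ivec6 = "int \<times> int \<times> int \<times> int \<times> int \<times> int"

definition zt3 :: "ivec6 \<Rightarrow> real \<times> real \<times> real" where
  "zt3 z = (case z of (a1, b1, a2, b2, a3, b3) \<Rightarrow> (zt a1 b1, zt a2 b2, zt a3 b3))"

definition dot_one :: "ivec6 \<Rightarrow> ivec6 \<Rightarrow> int" where
  "dot_one z w = (case z of (a1, b1, a2, b2, a3, b3) \<Rightarrow> case w of (c1, d1, c2, d2, c3, d3) \<Rightarrow>
     a1 * c1 + b1 * d1 + a2 * c2 + b2 * d2 + a3 * c3 + b3 * d3)"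

definition dot_tau :: "ivec6 \<Rightarrow> ivec6 \<Rightarrow> int" where
  "dot_tau z w = (case z of (a1, b1, a2, b2, a3, b3) \<Rightarrow> case w of (c1, d1, c2, d2, c3, d3) \<Rightarrow>
     a1 * d1 + b1 * c1 + b1 * d1 + a2 * d2 + b2 * c2 + b2 * d2 + a3 * d3 + b3 * c3 + b3 * d3)"

lemma dot3_zt3: "dot3 (zt3 z) (zt3 w) = zt (dot_one z w) (dot_tau z w)"
  by (cases z; cases w)
    (simp add: dot3_def zt3_def dot_one_def dot_tau_def zt_mult zt_add zt_eq_iff algebra_simps)

lemma zt3_eq_iff: "zt3 z = zt3 w \<longleftrightarrow> z = w"
  by (cases z; cases w) (auto simp: zt3_def zt_eq_iff)

lemma dot3_scale3: "dot3 (scale3 c x) (scale3 c x) = c * c * dot3 x x"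
  by (cases x) (simp add: dot3_def scale3_def algebra_simps)

lemma scale3_scale3: "scale3 c (scale3 d x) = scale3 (c * d) x"
  by (cases x) (simp add: scale3_def)

lemma scale3_1: "scale3 1 x = x"
  by (cases x) (simp add: scale3_def)

lemma in_lattice_iff: "in_lattice n x \<longleftrightarrow> (\<exists>z. scale3 (2 ^ n) x = zt3 z)"
proof
  assume "in_lattice n x"
  then show "\<exists>z. scale3 (2 ^ n) x = zt3 z"
    unfolding in_lattice_def ZT_iff
    by (cases "scale3 (2 ^ n) x") (auto simp: zt3_def intro: exI[of _ "(_, _, _, _, _, _)"])
next
  assume "\<exists>z. scale3 (2 ^ n) x = zt3 z"
  then obtain z where "scale3 (2 ^ n) x = zt3 z" by blast
  then show "in_lattice n x" unfolding in_lattice_def by (cases z) (auto simp: zt3_def ZT_iff)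
qed

text \<open>Modulo 2 the elements \<open>1, \<tau>, \<tau>'\<close> of \<open>\<int>[\<tau>]\<close> have coordinates
  \<open>(1, 0), (0, 1), (1, 1)\<close>.\<close>
definition parity_class :: "ivec6 \<Rightarrow> bool" where
  "parity_class z = (case z of (a1, b1, a2, b2, a3, b3) \<Rightarrow>
     (odd a1 \<and> even b1 \<and> odd a2 \<and> odd b2 \<and> even a3 \<and> odd b3) \<or>
     (odd a1 \<and> odd b1 \<and> even a2 \<and> odd b2 \<and> odd a3 \<and> even b3) \<or>
     (even a1 \<and> odd b1 \<and> odd a2 \<and> even b2 \<and> odd a3 \<and> odd b3))"

definition parity_class' :: "ivec6 \<Rightarrow> bool" where
  "parity_class' z = (case z of (a1, b1, a2, b2, a3, b3) \<Rightarrow>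
     (odd a1 \<and> even b1 \<and> even a2 \<and> odd b2 \<and> odd a3 \<and> odd b3) \<or>
     (even a1 \<and> odd b1 \<and> odd a2 \<and> odd b2 \<and> odd a3 \<and> even b3) \<or>
     (odd a1 \<and> odd b1 \<and> odd a2 \<and> even b2 \<and> even a3 \<and> odd b3))"

lemma red3_eq_zt3_iff_parity_class:
  "(red3_eq (zt3 z) (1, tau', tau) \<or> red3_eq (zt3 z) (tau', tau, 1) \<or> red3_eq (zt3 z) (tau, 1, tau'))
     \<longleftrightarrow> parity_class z"
  by (cases z) (simp add: red3_eq_def zt3_def one_eq_zt tau_eq_zt tau'_eq_zt red_eq_zt_iff parity_class_def)

lemma red3_eq_zt3_iff_parity_class':
  "(red3_eq (zt3 z) (1, tau, tau') \<or> red3_eq (zt3 z) (tau, tau', 1) \<or> red3_eq (zt3 z) (tau', 1, tau))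
     \<longleftrightarrow> parity_class' z"
  by (cases z) (simp add: red3_eq_def zt3_def one_eq_zt tau_eq_zt tau'_eq_zt red_eq_zt_iff parity_class'_def)

definition lattice_pts :: "nat \<Rightarrow> ivec6 set" where
  "lattice_pts n = {z. dot_one z z = 4 ^ n \<and> dot_tau z z = 0 \<and> parity_class z}"

definition lattice_pts' :: "nat \<Rightarrow> ivec6 set" where
  "lattice_pts' n = {z. dot_one z z = 4 ^ n \<and> dot_tau z z = 0 \<and> parity_class' z}"

lemma sphere_eq_image_zt3:
  assumes "\<And>z. R (zt3 z) \<longleftrightarrow> P z"
  shows "{x. in_lattice n x \<and> dot3 x x = 1 \<and> R (scale3 (2 ^ n) x)} =
    (\<lambda>z. scale3 (1 / 2 ^ n) (zt3 z)) ` {z. dot_one z z = 4 ^ n \<and> dot_tau z z = 0 \<and> P z}"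
proof -
  have unit: "dot3 x x = 1 \<longleftrightarrow> dot3 (scale3 (2 ^ n) x) (scale3 (2 ^ n) x) = zt (4 ^ n) 0" for x
    by (simp add: dot3_scale3 zt_def flip: power_mult_distrib)
  have scale_inv: "scale3 (1 / 2 ^ n) (scale3 (2 ^ n) y) = y" "scale3 (2 ^ n) (scale3 (1 / 2 ^ n) y) = y"
    for y by (simp_all add: scale3_scale3 scale3_1)
  show ?thesis
  proof (intro set_eqI iffI)
    fix x assume "x \<in> {x. in_lattice n x \<and> dot3 x x = 1 \<and> R (scale3 (2 ^ n) x)}"
    then have lat: "in_lattice n x" and "dot3 x x = 1" and "R (scale3 (2 ^ n) x)" by auto
    from lat obtain z where z: "scale3 (2 ^ n) x = zt3 z" unfolding in_lattice_iff by blast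
    have "dot_one z z = 4 ^ n \<and> dot_tau z z = 0"
      using \<open>dot3 x x = 1\<close> unfolding unit z dot3_zt3 zt_eq_iff .
    moreover have "P z" using \<open>R (scale3 (2 ^ n) x)\<close> z assms by simp
    moreover have "x = scale3 (1 / 2 ^ n) (zt3 z)" using scale_inv(1)[of x] z by simp
    ultimately show "x \<in> (\<lambda>z. scale3 (1 / 2 ^ n) (zt3 z)) ` {z. dot_one z z = 4 ^ n \<and> dot_tau z z = 0 \<and> P z}"
      by blast
  next
    fix x assume "x \<in> (\<lambda>z. scale3 (1 / 2 ^ n) (zt3 z)) ` {z. dot_one z z = 4 ^ n \<and> dot_tau z z = 0 \<and> P z}"
    then obtain z where x: "x = scale3 (1 / 2 ^ n) (zt3 z)"
      and norm: "dot_one z z = 4 ^ n" "dot_tau z z = 0" and "P z" by blast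
    have z: "scale3 (2 ^ n) x = zt3 z" using x scale_inv(2) by simp
    then have "in_lattice n x" unfolding in_lattice_iff by blast
    moreover have "dot3 x x = 1" unfolding unit z dot3_zt3 norm ..
    moreover have "R (scale3 (2 ^ n) x)" using \<open>P z\<close> z assms by simp
    ultimately show "x \<in> {x. in_lattice n x \<and> dot3 x x = 1 \<and> R (scale3 (2 ^ n) x)}" by blast
  qed
qed

lemma card_S3_eq: "card (S3 n) = card (lattice_pts n)"
  and card_S3'_eq: "card (S3' n) = card (lattice_pts' n)"
proof -
  have inj: "inj (\<lambda>z. scale3 (1 / 2 ^ n) (zt3 z))"
  proof (rule injI)
    fix z w assume "scale3 (1 / 2 ^ n) (zt3 z) = scale3 (1 / 2 ^ n) (zt3 w)"
    then have "scale3 (2 ^ n) (scale3 (1 / 2 ^ n) (zt3 z)) = scale3 (2 ^ n) (scale3 (1 / 2 ^ n) (zt3 w))"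
      by simp
    then show "z = w" by (simp add: scale3_scale3 scale3_1 zt3_eq_iff)
  qed
  have "S3 n = (\<lambda>z. scale3 (1 / 2 ^ n) (zt3 z)) ` lattice_pts n"
    unfolding S3_def lattice_pts_def by (rule sphere_eq_image_zt3) (rule red3_eq_zt3_iff_parity_class)
  then show "card (S3 n) = card (lattice_pts n)" by (simp add: card_image inj_on_subset[OF inj])
  have "S3' n = (\<lambda>z. scale3 (1 / 2 ^ n) (zt3 z)) ` lattice_pts' n"
    unfolding S3'_def lattice_pts'_def by (rule sphere_eq_image_zt3) (rule red3_eq_zt3_iff_parity_class')
  then show "card (S3' n) = card (lattice_pts' n)" by (simp add: card_image inj_on_subset[OF inj])
qed

text \<open>Conjugation \<open>a + b\<tau> \<mapsto> a + b\<tau>' = (a + b) - b\<tau>\<close> in each coordinate.\<close>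
definition galois :: "ivec6 \<Rightarrow> ivec6" where
  "galois z = (case z of (a1, b1, a2, b2, a3, b3) \<Rightarrow> (a1 + b1, - b1, a2 + b2, - b2, a3 + b3, - b3))"

lemma galois_galois: "galois (galois z) = z"
  by (cases z) (simp add: galois_def)

lemma dot_one_galois: "dot_one (galois z) (galois z) = dot_one z z + dot_tau z z"
  and dot_tau_galois: "dot_tau (galois z) (galois z) = - dot_tau z z"
  and parity_class'_galois: "parity_class' (galois z) \<longleftrightarrow> parity_class z"
  by (cases z; simp add: galois_def dot_one_def dot_tau_def parity_class_def parity_class'_def
      algebra_simps; blast)+

lemma card_lattice_pts': "card (lattice_pts' n) = card (lattice_pts n)"
proof -
  have "lattice_pts' n = galois ` lattice_pts n"
  proof (intro equalityI subsetI)
    fix w assume "w \<in> lattice_pts' n"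
    then have "galois w \<in> lattice_pts n"
      using parity_class'_galois[of "galois w"]
      by (simp add: lattice_pts_def lattice_pts'_def dot_one_galois dot_tau_galois galois_galois)
    then show "w \<in> galois ` lattice_pts n" using galois_galois[of w] by (metis image_eqI)
  qed (auto simp: lattice_pts_def lattice_pts'_def dot_one_galois dot_tau_galois parity_class'_galois)
  moreover have "inj galois" by (metis injI galois_galois)
  ultimately show ?thesis by (simp add: card_image inj_on_subset)
qed

lemma abs_le_square: "\<bar>x\<bar> \<le> x * (x :: int)"
proof (cases "x = 0")
  case False
  then have "\<bar>x\<bar> * 1 \<le> \<bar>x\<bar> * \<bar>x\<bar>" by (intro mult_left_mono) auto
  then show ?thesis by (simp add: abs_mult_self_eq)
qed simp

lemma finite_lattice_pts: "finite (lattice_pts n)"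
proof -
  let ?B = "{- (4 ^ n) .. 4 ^ n :: int}"
  have "lattice_pts n \<subseteq> ?B \<times> ?B \<times> ?B \<times> ?B \<times> ?B \<times> ?B"
  proof
    fix z assume "z \<in> lattice_pts n"
    then obtain a1 b1 a2 b2 a3 b3 where z: "z = (a1, b1, a2, b2, a3, b3)"
      and sum: "a1 * a1 + b1 * b1 + a2 * a2 + b2 * b2 + a3 * a3 + b3 * b3 = 4 ^ n"
      by (cases z) (auto simp: lattice_pts_def dot_one_def)
    have nonneg: "0 \<le> x * x" for x :: int by simp
    have "a1 * a1 \<le> 4 ^ n" "b1 * b1 \<le> 4 ^ n" "a2 * a2 \<le> 4 ^ n"
      "b2 * b2 \<le> 4 ^ n" "a3 * a3 \<le> 4 ^ n" "b3 * b3 \<le> 4 ^ n"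
      using sum nonneg[of a1] nonneg[of b1] nonneg[of a2] nonneg[of b2] nonneg[of a3] nonneg[of b3]
      by linarith+
    then show "z \<in> ?B \<times> ?B \<times> ?B \<times> ?B \<times> ?B \<times> ?B" unfolding z
      using abs_le_square[of a1] abs_le_square[of b1] abs_le_square[of a2]
        abs_le_square[of b2] abs_le_square[of a3] abs_le_square[of b3]
      by (auto simp: abs_le_iff)
  qed
  then show ?thesis by (rule finite_subset) simp
qed

lemma odd_square_ge_1: "odd x \<Longrightarrow> 1 \<le> x * (x :: int)"
  using abs_le_square[of x] by (cases "x = 0") auto

lemma square_eq_1: "x * x = (1 :: int) \<Longrightarrow> x = 1 \<or> x = - 1"
  using zmult_eq_1_iff[of x x] by auto

text \<open>Four coordinates are odd, so all squares are \<open>0\<close> or \<open>1\<close>; the sign choices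
  are then cut down by \<open>dot_tau z z = 0\<close>.\<close>
lemma lattice_pts_1: "lattice_pts 1 =
   {(1, 0, 1, - 1, 0, 1), (1, - 1, 0, 1, 1, 0), (0, 1, 1, 0, 1, - 1), (1, 0, 1, - 1, 0, - 1),
    (1, - 1, 0, 1, - 1, 0), (0, 1, 1, 0, - 1, 1), (1, 0, - 1, 1, 0, 1), (1, - 1, 0, - 1, 1, 0),
    (0, 1, - 1, 0, 1, - 1), (1, 0, - 1, 1, 0, - 1), (1, - 1, 0, - 1, - 1, 0), (0, 1, - 1, 0, - 1, 1),
    (- 1, 0, 1, - 1, 0, 1), (- 1, 1, 0, 1, 1, 0), (0, - 1, 1, 0, 1, - 1), (- 1, 0, 1, - 1, 0, - 1),
    (- 1, 1, 0, 1, - 1, 0), (0, - 1, 1, 0, - 1, 1), (- 1, 0, - 1, 1, 0, 1), (- 1, 1, 0, - 1, 1, 0),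
    (0, - 1, - 1, 0, 1, - 1), (- 1, 0, - 1, 1, 0, - 1), (- 1, 1, 0, - 1, - 1, 0), (0, - 1, - 1, 0, - 1, 1)}" (is "_ = ?S")
proof (intro equalityI subsetI)
  fix z assume "z \<in> lattice_pts 1"
  then obtain a1 b1 a2 b2 a3 b3 where z: "z = (a1, b1, a2, b2, a3, b3)"
    and one: "a1 * a1 + b1 * b1 + a2 * a2 + b2 * b2 + a3 * a3 + b3 * b3 = 4"
    and tau: "a1 * b1 + b1 * a1 + b1 * b1 + a2 * b2 + b2 * a2 + b2 * b2 + a3 * b3 + b3 * a3 + b3 * b3 = 0"
    and "parity_class (a1, b1, a2, b2, a3, b3)"
    by (cases z) (auto simp: lattice_pts_def dot_one_def dot_tau_def)
  have nonneg: "0 \<le> x * x" for x :: int by simp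
  from \<open>parity_class (a1, b1, a2, b2, a3, b3)\<close> consider
      "odd a1" "even b1" "odd a2" "odd b2" "even a3" "odd b3"
    | "odd a1" "odd b1" "even a2" "odd b2" "odd a3" "even b3"
    | "even a1" "odd b1" "odd a2" "even b2" "odd a3" "odd b3"
    unfolding parity_class_def by auto
  then show "z \<in> ?S"
  proof cases
    case 1
    then have "a1 * a1 = 1" "a2 * a2 = 1" "b2 * b2 = 1" "b3 * b3 = 1" "b1 * b1 = 0" "a3 * a3 = 0"
      using odd_square_ge_1[of a1] odd_square_ge_1[of a2] odd_square_ge_1[of b2]
        odd_square_ge_1[of b3] nonneg[of b1] nonneg[of a3] one by linarith+
    then have "a1 = 1 \<or> a1 = - 1" "a2 = 1 \<or> a2 = - 1" "b2 = 1 \<or> b2 = - 1" "b3 = 1 \<or> b3 = - 1"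
      "b1 = 0" "a3 = 0" using square_eq_1 by simp_all
    then show ?thesis using tau unfolding z by (elim disjE) simp_all
  next
    case 2
    then have "a1 * a1 = 1" "b1 * b1 = 1" "b2 * b2 = 1" "a3 * a3 = 1" "a2 * a2 = 0" "b3 * b3 = 0"
      using odd_square_ge_1[of a1] odd_square_ge_1[of b1] odd_square_ge_1[of b2]
        odd_square_ge_1[of a3] nonneg[of a2] nonneg[of b3] one by linarith+
    then have "a1 = 1 \<or> a1 = - 1" "b1 = 1 \<or> b1 = - 1" "b2 = 1 \<or> b2 = - 1" "a3 = 1 \<or> a3 = - 1"
      "a2 = 0" "b3 = 0" using square_eq_1 by simp_all
    then show ?thesis using tau unfolding z by (elim disjE) simp_all
  next
    case 3
    then have "b1 * b1 = 1" "a2 * a2 = 1" "a3 * a3 = 1" "b3 * b3 = 1" "a1 * a1 = 0" "b2 * b2 = 0"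
      using odd_square_ge_1[of b1] odd_square_ge_1[of a2] odd_square_ge_1[of a3]
        odd_square_ge_1[of b3] nonneg[of a1] nonneg[of b2] one by linarith+
    then have "b1 = 1 \<or> b1 = - 1" "a2 = 1 \<or> a2 = - 1" "a3 = 1 \<or> a3 = - 1" "b3 = 1 \<or> b3 = - 1"
      "a1 = 0" "b2 = 0" using square_eq_1 by simp_all
    then show ?thesis using tau unfolding z by (elim disjE) simp_all
  qed
next
  fix z assume "z \<in> ?S"
  then show "z \<in> lattice_pts 1"
    by (elim insertE emptyE) (simp_all add: lattice_pts_def dot_one_def dot_tau_def parity_class_def)
qed

lemma card_lattice_pts_1: "card (lattice_pts 1) = 24"
  unfolding lattice_pts_1 by simp

definition vmap :: "(int \<Rightarrow> int) \<Rightarrow> ivec6 \<Rightarrow> ivec6" where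
  "vmap f z = (case z of (a1, b1, a2, b2, a3, b3) \<Rightarrow> (f a1, f b1, f a2, f b2, f a3, f b3))"

abbreviation vscale :: "int \<Rightarrow> ivec6 \<Rightarrow> ivec6" where
  "vscale c \<equiv> vmap ((*) c)"

definition vdvd :: "int \<Rightarrow> ivec6 \<Rightarrow> bool" where
  "vdvd m z \<longleftrightarrow> (case z of (a1, b1, a2, b2, a3, b3) \<Rightarrow>
     m dvd a1 \<and> m dvd b1 \<and> m dvd a2 \<and> m dvd b2 \<and> m dvd a3 \<and> m dvd b3)"

lemma vmod_add_vdiv: "vmap (\<lambda>x. x mod m) z + vscale m (vmap (\<lambda>x. x div m) z) = z"
  by (cases z) (simp add: vmap_def)

lemma vscale_vdiv: "vdvd m z \<Longrightarrow> vscale m (vmap (\<lambda>x. x div m) z) = z"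
  by (cases z) (simp add: vmap_def vdvd_def)

lemma vdvd_vscale: "vdvd m (vscale m z)"
  by (cases z) (simp add: vmap_def vdvd_def)

lemma vdvd_add_vscale_iff: "vdvd m (u + vscale m w) \<longleftrightarrow> vdvd m u"
  by (cases u; cases w) (simp add: vmap_def vdvd_def dvd_add_left_iff)

lemma vscale_eq_iff: "m \<noteq> 0 \<Longrightarrow> vscale m z = vscale m w \<longleftrightarrow> z = w"
  by (cases z; cases w) (simp add: vmap_def)

lemma dot_one_add_vscale:
  "dot_one (u + vscale m w) (u + vscale m w) = dot_one u u + 2 * m * dot_one u w + m * m * dot_one w w"
  by (cases u; cases w) (simp add: vmap_def dot_one_def algebra_simps)

lemma dot_tau_add_vscale:
  "dot_tau (u + vscale m w) (u + vscale m w) = dot_tau u u + 2 * m * dot_tau u w + m * m * dot_tau w w"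
  by (cases u; cases w) (simp add: vmap_def dot_tau_def algebra_simps)

lemma parity_class_add_vscale: "even m \<Longrightarrow> parity_class (u + vscale m w) \<longleftrightarrow> parity_class u"
  by (cases u; cases w) (auto simp: vmap_def parity_class_def)

text \<open>In \<open>\<int>[\<tau>]\<close>-coordinates, \<open>lift k\<close> is multiplication by the matrices
  \<open>M\<^sub>0 = [[-1, -\<tau>, -\<tau>'], [-\<tau>', -1, -\<tau>], [\<tau>, \<tau>', 1]]\<close>,
  \<open>M\<^sub>1 = D M\<^sub>0\<close>, \<open>M\<^sub>2 = E M\<^sub>0 E\<close>, \<open>M\<^sub>3 = D E M\<^sub>0 E\<close>
  with \<open>D = diag(1, -1, -1)\<close> and \<open>E = diag(1, 1, -1)\<close>; they satisfy \<open>M\<^sub>k\<^sup>T M\<^sub>k = 4\<close>,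
  and \<open>lift_adj k\<close> is multiplication by the transposes. Every \<open>k \<ge> 3\<close> yields \<open>M\<^sub>3\<close>.\<close>
definition lift :: "nat \<Rightarrow> ivec6 \<Rightarrow> ivec6" where
  "lift k z = (case z of (a1, b1, a2, b2, a3, b3) \<Rightarrow>
    if k = 0 then ((-a1 - a3 - b2 + b3), (-a2 + a3 - b1 - b2), (-a1 - a2 + b1 - b3), (a1 - a3 - b2 - b3), (a2 + a3 + b1 - b2), (a1 - a2 + b1 + b3)) else
    if k = 1 then ((-a1 - a3 - b2 + b3), (-a2 + a3 - b1 - b2), (a1 + a2 - b1 + b3), (-a1 + a3 + b2 + b3), (-a2 - a3 - b1 + b2), (-a1 + a2 - b1 - b3)) else
    if k = 2 then ((-a1 + a3 - b2 - b3), (-a2 - a3 - b1 - b2), (-a1 - a2 + b1 + b3), (a1 + a3 - b2 + b3), (-a2 + a3 - b1 + b2), (-a1 + a2 - b1 + b3)) else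
    ((-a1 + a3 - b2 - b3), (-a2 - a3 - b1 - b2), (a1 + a2 - b1 - b3), (-a1 - a3 + b2 - b3), (a2 - a3 + b1 - b2), (a1 - a2 + b1 - b3)))"

definition lift_adj :: "nat \<Rightarrow> ivec6 \<Rightarrow> ivec6" where
  "lift_adj k z = (case z of (a1, b1, a2, b2, a3, b3) \<Rightarrow>
    if k = 0 then ((-a1 - a2 + b2 + b3), (a2 + a3 - b1 + b3), (-a2 + a3 - b1 - b3), (-a1 - a3 - b1 - b2), (-a1 + a3 + b1 - b2), (a1 - a2 - b2 + b3)) else
    if k = 1 then ((-a1 + a2 - b2 - b3), (-a2 - a3 - b1 - b3), (a2 - a3 - b1 + b3), (-a1 + a3 - b1 + b2), (-a1 - a3 + b1 + b2), (a1 + a2 + b2 - b3)) else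
    if k = 2 then ((-a1 - a2 + b2 - b3), (a2 - a3 - b1 - b3), (-a2 - a3 - b1 + b3), (-a1 + a3 - b1 - b2), (a1 + a3 - b1 + b2), (-a1 + a2 + b2 + b3)) else
    ((-a1 + a2 - b2 + b3), (-a2 + a3 - b1 + b3), (a2 + a3 - b1 - b3), (-a1 - a3 - b1 + b2), (a1 - a3 - b1 - b2), (-a1 - a2 - b2 - b3)))"

lemma less_4_cases: "k < (4 :: nat) \<Longrightarrow> k = 0 \<or> k = 1 \<or> k = 2 \<or> k = 3"
  by auto

lemma lift_adj_lift: "k < 4 \<Longrightarrow> lift_adj k (lift k z) = vscale 4 z"
  and lift_lift_adj: "k < 4 \<Longrightarrow> lift k (lift_adj k z) = vscale 4 z"
  and dot_one_lift: "k < 4 \<Longrightarrow> dot_one (lift k z) (lift k z) = 4 * dot_one z z"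
  and dot_tau_lift: "k < 4 \<Longrightarrow> dot_tau (lift k z) (lift k z) = 4 * dot_tau z z"
  using less_4_cases[of k]
  by (cases z; auto simp: lift_def lift_adj_def vmap_def dot_one_def dot_tau_def algebra_simps)+

lemma lift_add: "lift k (u + w) = lift k u + lift k w"
  and lift_vscale: "lift k (vscale c w) = vscale c (lift k w)"
  and lift_adj_add: "lift_adj k (u + w) = lift_adj k u + lift_adj k w"
  and lift_adj_vscale: "lift_adj k (vscale c w) = vscale c (lift_adj k w)"
  by (cases u; cases w; simp add: lift_def lift_adj_def vmap_def algebra_simps)+

lemma parity_class_lift: "parity_class z \<Longrightarrow> parity_class (lift k z)"
  by (cases z) (auto simp: parity_class_def lift_def)

text \<open>The right-hand side evaluates each \<open>P k\<close> only once, which keeps the finite checks below fast.\<close>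
lemma ex1_less_4_iff: "(\<exists>!k. k < (4 :: nat) \<and> P k) \<longleftrightarrow> count_list [P 0, P 1, P 2, P 3] True = 1"
  by (cases "P 0"; cases "P 1"; cases "P 2"; cases "P 3") (auto simp: less_Suc_eq numeral_eq_Suc)

text \<open>A finite check: the parity class leaves \<open>3 \<cdot> 2\<^sup>6 = 192\<close> residue vectors modulo 4.\<close>
lemma unique_lift_index_residue:
  fixes a1 b1 a2 b2 a3 b3 :: int
  defines "r \<equiv> (a1, b1, a2, b2, a3, b3)"
  assumes box: "a1 \<in> {0..3}" "b1 \<in> {0..3}" "a2 \<in> {0..3}" "b2 \<in> {0..3}" "a3 \<in> {0..3}" "b3 \<in> {0..3}"
    and "parity_class r" and norms: "8 dvd dot_one r r" "8 dvd dot_tau r r"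
  shows "\<exists>!k. k < 4 \<and> vdvd 4 (lift_adj k r)"
proof -
  have odd_res: "x = 1 \<or> x = 3" if "x \<in> {0..3}" "odd x" for x :: int
    using that unfolding atLeastAtMost_iff by presburger
  have even_res: "x = 0 \<or> x = 2" if "x \<in> {0..3}" "even x" for x :: int
    using that unfolding atLeastAtMost_iff by presburger
  let ?P = "\<lambda>k. vdvd 4 (lift_adj k r)"
  from \<open>parity_class r\<close> consider
      "odd a1" "even b1" "odd a2" "odd b2" "even a3" "odd b3"
    | "odd a1" "odd b1" "even a2" "odd b2" "odd a3" "even b3"
    | "even a1" "odd b1" "odd a2" "even b2" "odd a3" "odd b3"
    unfolding r_def parity_class_def by auto
  then have "count_list [?P 0, ?P 1, ?P 2, ?P 3] True = 1"
  proof cases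
    case 1
    then have "a1 = 1 \<or> a1 = 3" "b1 = 0 \<or> b1 = 2" "a2 = 1 \<or> a2 = 3" "b2 = 1 \<or> b2 = 3"
      "a3 = 0 \<or> a3 = 2" "b3 = 1 \<or> b3 = 3" using box odd_res even_res by simp_all
    then show ?thesis using norms unfolding r_def
      by (elim disjE) (simp_all add: lift_adj_def vdvd_def dot_one_def dot_tau_def)
  next
    case 2
    then have "a1 = 1 \<or> a1 = 3" "b1 = 1 \<or> b1 = 3" "a2 = 0 \<or> a2 = 2" "b2 = 1 \<or> b2 = 3"
      "a3 = 1 \<or> a3 = 3" "b3 = 0 \<or> b3 = 2" using box odd_res even_res by simp_all
    then show ?thesis using norms unfolding r_def
      by (elim disjE) (simp_all add: lift_adj_def vdvd_def dot_one_def dot_tau_def)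
  next
    case 3
    then have "a1 = 0 \<or> a1 = 2" "b1 = 1 \<or> b1 = 3" "a2 = 1 \<or> a2 = 3" "b2 = 0 \<or> b2 = 2"
      "a3 = 1 \<or> a3 = 3" "b3 = 1 \<or> b3 = 3" using box odd_res even_res by simp_all
    then show ?thesis using norms unfolding r_def
      by (elim disjE) (simp_all add: lift_adj_def vdvd_def dot_one_def dot_tau_def)
  qed
  then show ?thesis unfolding ex1_less_4_iff .
qed

lemma parity_class_descent_residue:
  fixes a1 b1 a2 b2 a3 b3 :: int
  defines "r \<equiv> (a1, b1, a2, b2, a3, b3)"
  assumes box: "a1 \<in> {0, 1}" "b1 \<in> {0, 1}" "a2 \<in> {0, 1}" "b2 \<in> {0, 1}" "a3 \<in> {0, 1}" "b3 \<in> {0, 1}"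
    and norms: "4 dvd dot_one r r" "4 dvd dot_tau r r" and "k < 4" and lifted: "parity_class (lift k r)"
  shows "parity_class r"
proof -
  have "a1 = 0 \<or> a1 = 1" "b1 = 0 \<or> b1 = 1" "a2 = 0 \<or> a2 = 1"
    "b2 = 0 \<or> b2 = 1" "a3 = 0 \<or> a3 = 1" "b3 = 0 \<or> b3 = 1"
    using box by simp_all
  then show ?thesis using less_4_cases[OF \<open>k < 4\<close>] norms lifted unfolding r_def
    by (elim disjE) (simp_all add: lift_def parity_class_def dot_one_def dot_tau_def)
qed

lemma unique_lift_index:
  assumes "parity_class y" and "8 dvd dot_one y y" and "8 dvd dot_tau y y"
  shows "\<exists>!k. k < 4 \<and> vdvd 4 (lift_adj k y)"
proof -
  define r where "r = vmap (\<lambda>x. x mod 4) y"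
  define q where "q = vmap (\<lambda>x. x div 4) y"
  have y: "y = r + vscale 4 q" unfolding r_def q_def by (rule vmod_add_vdiv[symmetric])
  have "parity_class r" using assms(1) parity_class_add_vscale[of 4 r q] y by simp
  moreover have "8 dvd dot_one r r" "8 dvd dot_tau r r"
    using assms(2,3) unfolding y dot_one_add_vscale dot_tau_add_vscale
    by (simp_all add: dvd_add_left_iff)
  moreover have "vdvd 4 (lift_adj k y) \<longleftrightarrow> vdvd 4 (lift_adj k r)" for k
    unfolding y lift_adj_add lift_adj_vscale vdvd_add_vscale_iff ..
  moreover obtain a1 b1 a2 b2 a3 b3 where "r = (a1, b1, a2, b2, a3, b3)"
    and "a1 \<in> {0..3}" "b1 \<in> {0..3}" "a2 \<in> {0..3}" "b2 \<in> {0..3}" "a3 \<in> {0..3}" "b3 \<in> {0..3}"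
    unfolding r_def by (cases y) (simp add: vmap_def)
  ultimately show ?thesis using unique_lift_index_residue by simp
qed

lemma parity_class_descent:
  assumes "4 dvd dot_one z z" and "4 dvd dot_tau z z" and "k < 4" and "parity_class (lift k z)"
  shows "parity_class z"
proof -
  define r where "r = vmap (\<lambda>x. x mod 2) z"
  define q where "q = vmap (\<lambda>x. x div 2) z"
  have z: "z = r + vscale 2 q" unfolding r_def q_def by (rule vmod_add_vdiv[symmetric])
  have "4 dvd dot_one r r" "4 dvd dot_tau r r"
    using assms(1,2) unfolding z dot_one_add_vscale dot_tau_add_vscale
    by (simp_all add: dvd_add_left_iff)
  moreover have "parity_class (lift k r)"
    using assms(4) parity_class_add_vscale[of 2 "lift k r" "lift k q"]
    unfolding z lift_add lift_vscale by simp
  moreover obtain a1 b1 a2 b2 a3 b3 where "r = (a1, b1, a2, b2, a3, b3)"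
    and "a1 \<in> {0, 1}" "b1 \<in> {0, 1}" "a2 \<in> {0, 1}" "b2 \<in> {0, 1}" "a3 \<in> {0, 1}" "b3 \<in> {0, 1}"
    unfolding r_def by (cases z) (simp add: vmap_def mod2_eq_if)
  ultimately have "parity_class r" using parity_class_descent_residue assms(3) by simp
  then show ?thesis using parity_class_add_vscale[of 2 r q] z by simp
qed

lemma unique_lift_index_lattice_pts:
  assumes "1 \<le> n" and "y \<in> lattice_pts (Suc n)"
  shows "\<exists>!k. k < 4 \<and> vdvd 4 (lift_adj k y)"
proof (rule unique_lift_index)
  obtain m where "n = Suc m" using assms(1) by (cases n) auto
  then have "dot_one y y = 8 * (2 * 4 ^ m)" using assms(2) by (simp add: lattice_pts_def)
  then show "8 dvd dot_one y y" by simp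
qed (use assms(2) in \<open>simp_all add: lattice_pts_def\<close>)

lemma lattice_pts_Suc:
  assumes "1 \<le> n"
  shows "lattice_pts (Suc n) = (\<Union>k<4. lift k ` lattice_pts n)"
proof (intro equalityI subsetI)
  fix y assume y: "y \<in> lattice_pts (Suc n)"
  then obtain k where k: "k < 4" "vdvd 4 (lift_adj k y)"
    using unique_lift_index_lattice_pts[OF assms] by blast
  define z where "z = vmap (\<lambda>x. x div 4) (lift_adj k y)"
  have "vscale 4 (lift k z) = vscale 4 y"
    unfolding lift_vscale[symmetric] z_def vscale_vdiv[OF k(2)] lift_lift_adj[OF k(1)] ..
  then have yz: "lift k z = y" by (simp add: vscale_eq_iff)
  have "4 * dot_one z z = 4 * 4 ^ n" "4 * dot_tau z z = 4 * 0"
    using y unfolding yz[symmetric] lattice_pts_def by (simp_all add: dot_one_lift dot_tau_lift k(1))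
  then have norms: "dot_one z z = 4 ^ n" "dot_tau z z = 0" by simp_all
  have "parity_class z"
  proof (rule parity_class_descent[OF _ _ k(1)])
    show "4 dvd dot_one z z" unfolding norms using assms by (simp add: dvd_power)
    show "parity_class (lift k z)" using y unfolding yz by (simp add: lattice_pts_def)
  qed (simp add: norms)
  with norms yz k(1) show "y \<in> (\<Union>k<4. lift k ` lattice_pts n)" by (auto simp: lattice_pts_def)
qed (auto simp: lattice_pts_def dot_one_lift dot_tau_lift parity_class_lift)

lemma lift_images_disjoint:
  assumes "1 \<le> n" and "i < 4" and "j < 4" and "i \<noteq> j"
  shows "lift i ` lattice_pts n \<inter> lift j ` lattice_pts n = {}"
proof (rule equals0I)
  fix y assume "y \<in> lift i ` lattice_pts n \<inter> lift j ` lattice_pts n"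
  then obtain z z' where z: "z \<in> lattice_pts n" "y = lift i z" and z': "y = lift j z'" by blast
  have "y \<in> lattice_pts (Suc n)" using lattice_pts_Suc[OF assms(1)] z assms(2) by blast
  moreover have "vdvd 4 (lift_adj i y)" using z(2) assms(2) by (simp add: lift_adj_lift vdvd_vscale)
  moreover have "vdvd 4 (lift_adj j y)" using z' assms(3) by (simp add: lift_adj_lift vdvd_vscale)
  ultimately have "i = j" using unique_lift_index_lattice_pts[OF assms(1)] assms(2,3) by blast
  with assms(4) show False ..
qed

lemma card_lattice_pts_Suc:
  assumes "1 \<le> n"
  shows "card (lattice_pts (Suc n)) = 4 * card (lattice_pts n)"
proof -
  have inj: "inj_on (lift k) (lattice_pts n)" if "k < 4" for k
  proof (rule inj_onI)
    fix z z' assume "lift k z = lift k z'"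
    then have "vscale 4 z = vscale 4 z'" by (metis lift_adj_lift[OF that])
    then show "z = z'" by (simp add: vscale_eq_iff)
  qed
  have "card (\<Union>k<4. lift k ` lattice_pts n) = (\<Sum>k<4. card (lift k ` lattice_pts n))"
    by (intro card_UN_disjoint) (simp_all add: finite_lattice_pts lift_images_disjoint[OF assms])
  also have "\<dots> = (\<Sum>k<(4::nat). card (lattice_pts n))"
    by (rule sum.cong) (simp_all add: card_image inj)
  finally show ?thesis unfolding lattice_pts_Suc[OF assms] by simp
qed

lemma card_lattice_pts: "1 \<le> n \<Longrightarrow> card (lattice_pts n) = 6 * 4 ^ n"
proof (induction n rule: dec_induct)
  case base
  show ?case unfolding card_lattice_pts_1 by simp
next
  case (step m)
  then show ?case by (simp add: card_lattice_pts_Suc)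
qed

theorem mainTheorem9:
  fixes n :: nat
  assumes "n \<ge> 1"
  shows "card (S3 n) = 3 * 2 ^ (2 * n + 1) \<and> card (S3' n) = 3 * 2 ^ (2 * n + 1)"
proof -
  have "(3 :: nat) * 2 ^ (2 * n + 1) = 6 * 4 ^ n" by (simp add: power_mult power_add)
  then show ?thesis
    using card_S3_eq card_S3'_eq card_lattice_pts' card_lattice_pts[OF assms] by simp
qed

end
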